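(* Let $X,Y$ be countable discrete metric spaces, $d\in D(X,Y)$, $d'\in D(Y,X)$ with $M_{d\circ d'}(Y,Y)=M_{d^0}(Y,Y)$ and $M_{d'\circ d}(X,X)=M_{d^0}(X,X)$. Then $X$ and $Y$ are almost isometric: there exist almost isometries $f:X\to Y$, $g:Y\to X$ and $C>0$ with $d_X(g(f(x)),x)<C$ and $d_Y(f(g(y)),y)<C$ for all $x\in X$, $y\in Y$.
   Context: $D(X,Y)$: metrics on $X\sqcup Y$ extending $d_X,d_Y$. Composites: $(d'\circ d)(x_1,x_2')=\inf_{y\in Y}(d(x_1,y)+d'(y,x_2'))$ on $X\sqcup X'$ ($X'$ a copy of $X$), similarly $(d\circ d')(y_1,y_2')=\inf_{x\in X}(d'(y_1,x)+d(x,y_2'))$. For such a function $\rho$ on $X\sqcup X'$, $M_\rho(X,X)$ is the norm closure of bounded operators $T$ on $l^2(X)$ for which there is $L$ with $\langle T\delta_{x_1},\delta_{x_2}\rangle=0$ whenever $\rho(x_1,x_2')\ge L$. $d^0(x_1,x_2')=d_X(x_1,x_2)+1$, so $M_{d^0}(X,X)=C^*_u(X)$. An almost isometry $f:X\to Y$ satisfies $d_X(x,x')-C\le d_Y(f(x),f(x'))\le d_X(x,x')+C$ for some $C>0$. *)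

theory Defs
  imports "HOL-Analysis.Analysis"
begin

definition metric_fun :: "('c \<Rightarrow> 'c \<Rightarrow> real) \<Rightarrow> bool" where
  "metric_fun d \<longleftrightarrow> (\<forall>x y. d x y = 0 \<longleftrightarrow> x = y) \<and> (\<forall>x y. d x y = d y x)
     \<and> (\<forall>x y z. d x z \<le> d x y + d y z)"

definition D_metrics :: "('a::metric_space + 'b::metric_space \<Rightarrow> 'a + 'b \<Rightarrow> real) set" where
  "D_metrics = {d. metric_fun d \<and> (\<forall>x x'. d (Inl x) (Inl x') = dist x x')
                  \<and> (\<forall>y y'. d (Inr y) (Inr y') = dist y y')}"

text \<open>Composite: for e on P+Q and e' on Q+P, the function on P (x) P' given by
  (e' o e)(p1,p2') = inf_q (e(p1,q) + e'(q,p2')).\<close>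
definition comp_metric :: "('p + 'q \<Rightarrow> 'p + 'q \<Rightarrow> real) \<Rightarrow> ('q + 'p \<Rightarrow> 'q + 'p \<Rightarrow> real)
    \<Rightarrow> 'p \<Rightarrow> 'p \<Rightarrow> real" where
  "comp_metric e e' p1 p2 = Inf {e (Inl p1) (Inr q) + e' (Inl q) (Inr p2) | q. True}"

definition d0 :: "'a::metric_space \<Rightarrow> 'a \<Rightarrow> real" where
  "d0 x1 x2 = dist x1 x2 + 1"

text \<open>A bounded operator T on l^2(X) is encoded by its matrix
  m i j = <T delta_j, delta_i>; T is determined by its action on finitely supported vectors.\<close>

definition finsupp :: "('a \<Rightarrow> complex) \<Rightarrow> bool" where
  "finsupp v \<longleftrightarrow> finite {x. v x \<noteq> 0}"

definition mat_apply :: "('a \<Rightarrow> 'a \<Rightarrow> complex) \<Rightarrow> ('a \<Rightarrow> complex) \<Rightarrow> 'a \<Rightarrow> complex" where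
  "mat_apply m v i = (\<Sum>j\<in>{x. v x \<noteq> 0}. m i j * v j)"

definition l2_summable :: "('a \<Rightarrow> complex) \<Rightarrow> bool" where
  "l2_summable w \<longleftrightarrow> (\<lambda>x. (cmod (w x))^2) summable_on UNIV"

definition l2_sq :: "('a \<Rightarrow> complex) \<Rightarrow> real" where
  "l2_sq w = (\<Sum>\<^sub>\<infinity>x. (cmod (w x))^2)"

definition bounded_mat :: "('a \<Rightarrow> 'a \<Rightarrow> complex) \<Rightarrow> bool" where
  "bounded_mat m \<longleftrightarrow> (\<exists>B. \<forall>v. finsupp v \<longrightarrow>
      l2_summable (mat_apply m v) \<and> l2_sq (mat_apply m v) \<le> B^2 * l2_sq v)"

definition op_norm :: "('a \<Rightarrow> 'a \<Rightarrow> complex) \<Rightarrow> real" where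
  "op_norm m = Inf {B. 0 \<le> B \<and> (\<forall>v. finsupp v \<longrightarrow> l2_sq (mat_apply m v) \<le> B^2 * l2_sq v)}"

definition finite_prop :: "('a \<Rightarrow> 'a \<Rightarrow> real) \<Rightarrow> ('a \<Rightarrow> 'a \<Rightarrow> complex) \<Rightarrow> bool" where
  "finite_prop rho m \<longleftrightarrow> (\<exists>L. \<forall>x1 x2. rho x1 x2 \<ge> L \<longrightarrow> m x2 x1 = 0)"

text \<open>M_rho(X,X): norm closure of the bounded operators of finite rho-propagation.\<close>
definition M_alg :: "('a \<Rightarrow> 'a \<Rightarrow> real) \<Rightarrow> ('a \<Rightarrow> 'a \<Rightarrow> complex) set" where
  "M_alg rho = {m. bounded_mat m \<and> (\<forall>\<epsilon>>0. \<exists>s. bounded_mat s \<and> finite_prop rho s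
                   \<and> op_norm (\<lambda>i j. m i j - s i j) < \<epsilon>)}"

definition almost_isometry :: "('a::metric_space \<Rightarrow> 'b::metric_space) \<Rightarrow> bool" where
  "almost_isometry f \<longleftrightarrow> (\<exists>C>0. \<forall>x x'. dist x x' - C \<le> dist (f x) (f x')
                                         \<and> dist (f x) (f x') \<le> dist x x' + C)"

end

theory Submission
  imports Defs
begin

text \<open>The identity operator lies in \<open>C\<^sup>*\<^sub>u(Y) = M\<^sub>d\<^sub>0(Y,Y) = M\<^bsub>d\<circ>d'\<^esub>(Y,Y)\<close>, so it is
  within norm distance less than 1 of an operator \<open>s\<close> of finite \<open>d\<circ>d'\<close>-propagation \<open>L\<close>.
  Then \<open>1 - s\<close> has norm less than 1, hence so do its matrix entries, so every diagonal
  entry of \<open>s\<close> is nonzero and \<open>(d\<circ>d')(y,y') < L\<close> for all \<open>y\<close>: every \<open>y\<close> lies within \<open>L\<close>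
  of some \<open>x\<close> in the glued metric, and symmetrically. Choosing such nearby points gives
  maps \<open>f : X \<rightarrow> Y\<close> and \<open>g : Y \<rightarrow> X\<close> which, by the triangle inequality in \<open>X \<squnion> Y\<close>, are
  mutually coarse-inverse almost isometries.\<close>

definition id_mat :: "'a \<Rightarrow> 'a \<Rightarrow> complex" where
  "id_mat i j = (if i = j then 1 else 0)"

lemma l2_summable_finsupp:
  assumes "finsupp v" shows "l2_summable v"
proof -
  have "(\<lambda>x. (cmod (v x))^2) summable_on {x. v x \<noteq> 0}"
    using assms by (simp add: finsupp_def)
  then show ?thesis
    unfolding l2_summable_def by (rule summable_on_cong_neutral[THEN iffD1, rotated -1]) auto
qed

lemma l2_sq_nonneg: "l2_sq v \<ge> 0"
  unfolding l2_sq_def by (rule infsum_nonneg) auto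

lemma cmod_diff_sq_le: "(cmod (a - b))^2 \<le> 2 * (cmod a)^2 + 2 * (cmod b)^2"
proof -
  have "(cmod (a - b))^2 \<le> (cmod a + cmod b)^2"
    by (rule power_mono[OF norm_triangle_ineq4]) simp
  also have "\<dots> \<le> 2 * (cmod a)^2 + 2 * (cmod b)^2"
    using zero_le_power2[of "cmod a - cmod b"] by (simp add: power2_eq_square algebra_simps)
  finally show ?thesis .
qed

lemma l2_diff:
  assumes u: "l2_summable u" and w: "l2_summable w"
  shows "l2_summable (\<lambda>x. u x - w x)" and "l2_sq (\<lambda>x. u x - w x) \<le> 2 * l2_sq u + 2 * l2_sq w"
proof -
  have sum_bound: "(\<lambda>x. 2 * (cmod (u x))^2 + 2 * (cmod (w x))^2) summable_on UNIV"
    using u w unfolding l2_summable_def by (intro summable_on_add summable_on_cmult_right)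
  show sum_diff: "l2_summable (\<lambda>x. u x - w x)"
    unfolding l2_summable_def
    by (rule summable_on_comparison_test[OF sum_bound]) (auto simp: cmod_diff_sq_le)
  have "l2_sq (\<lambda>x. u x - w x) \<le> (\<Sum>\<^sub>\<infinity>x. 2 * (cmod (u x))^2 + 2 * (cmod (w x))^2)"
    using sum_diff sum_bound unfolding l2_sq_def l2_summable_def
    by (rule infsum_mono) (auto simp: cmod_diff_sq_le)
  also have "\<dots> = 2 * l2_sq u + 2 * l2_sq w"
    using u w unfolding l2_sq_def l2_summable_def
    by (simp add: infsum_add summable_on_cmult_right infsum_cmult_right)
  finally show "l2_sq (\<lambda>x. u x - w x) \<le> 2 * l2_sq u + 2 * l2_sq w" .
qed

lemma mat_apply_id_mat: "finsupp v \<Longrightarrow> mat_apply id_mat v = v"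
proof
  fix i assume "finsupp v"
  then have "finite {x. v x \<noteq> 0}" by (simp add: finsupp_def)
  moreover have "mat_apply id_mat v i = (\<Sum>j\<in>{x. v x \<noteq> 0}. if j = i then v i else 0)"
    unfolding mat_apply_def id_mat_def by (rule sum.cong) auto
  ultimately show "mat_apply id_mat v i = v i" by simp
qed

lemma mat_apply_diff: "mat_apply (\<lambda>i j. m i j - n i j) v = (\<lambda>i. mat_apply m v i - mat_apply n v i)"
  unfolding mat_apply_def by (simp add: left_diff_distrib sum_subtractf)

lemma bounded_mat_id_mat: "bounded_mat id_mat"
  unfolding bounded_mat_def
  by (rule exI[of _ 1]) (simp add: mat_apply_id_mat l2_summable_finsupp)

lemma bounded_mat_diff:
  assumes "bounded_mat m" and "bounded_mat n"
  shows "bounded_mat (\<lambda>i j. m i j - n i j)"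
proof -
  obtain Bm Bn where
    Bm: "\<And>v. finsupp v \<Longrightarrow> l2_summable (mat_apply m v) \<and> l2_sq (mat_apply m v) \<le> Bm^2 * l2_sq v" and
    Bn: "\<And>v. finsupp v \<Longrightarrow> l2_summable (mat_apply n v) \<and> l2_sq (mat_apply n v) \<le> Bn^2 * l2_sq v"
    using assms unfolding bounded_mat_def by metis
  have "l2_summable (mat_apply (\<lambda>i j. m i j - n i j) v)
      \<and> l2_sq (mat_apply (\<lambda>i j. m i j - n i j) v) \<le> (sqrt (2 * Bm^2 + 2 * Bn^2))^2 * l2_sq v"
    if "finsupp v" for v
    using l2_diff[of "mat_apply m v" "mat_apply n v"] Bm[OF that] Bn[OF that]
    by (simp add: mat_apply_diff algebra_simps)
  then show ?thesis unfolding bounded_mat_def by blast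
qed

lemma op_norm_zero: "op_norm (\<lambda>i j. 0::complex) = 0"
proof -
  have "mat_apply (\<lambda>i j. 0::complex) v = (\<lambda>_. 0)" for v :: "'a \<Rightarrow> complex"
    by (rule ext) (simp add: mat_apply_def)
  moreover have "l2_sq (\<lambda>_::'a. 0::complex) = 0" by (simp add: l2_sq_def)
  ultimately have "{B. 0 \<le> B \<and> (\<forall>v::'a \<Rightarrow> complex. finsupp v \<longrightarrow>
            l2_sq (mat_apply (\<lambda>i j. 0::complex) v) \<le> B^2 * l2_sq v)} = {0..}"
    by (auto intro!: mult_nonneg_nonneg l2_sq_nonneg)
  then show ?thesis unfolding op_norm_def by simp
qed

lemma norm_entry_le_op_norm:
  assumes "bounded_mat m" shows "cmod (m i j) \<le> op_norm m"
proof -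
  define S where "S = {B. 0 \<le> B \<and> (\<forall>v. finsupp v \<longrightarrow> l2_sq (mat_apply m v) \<le> B^2 * l2_sq v)}"
  obtain B where "\<And>v. finsupp v \<Longrightarrow> l2_sq (mat_apply m v) \<le> B^2 * l2_sq v"
    using assms unfolding bounded_mat_def by blast
  then have "\<bar>B\<bar> \<in> S" unfolding S_def by (simp add: power2_abs)
  moreover have "cmod (m i j) \<le> b" if b: "b \<in> S" for b
  proof -
    define e :: "'a \<Rightarrow> complex" where "e = (\<lambda>k. if k = j then 1 else 0)"
    have fin: "finsupp e" unfolding finsupp_def e_def by simp
    have "l2_sq e = (\<Sum>\<^sub>\<infinity>x\<in>{j}. (cmod (e x))^2)"
      unfolding l2_sq_def by (rule infsum_cong_neutral) (auto simp: e_def)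
    then have e_norm: "l2_sq e = 1" by (simp add: e_def)
    have "mat_apply m e i = (\<Sum>k\<in>{j}. m i k * e k)"
      unfolding mat_apply_def e_def by (rule sum.cong) auto
    then have "(cmod (m i j))^2 = (\<Sum>x\<in>{i}. (cmod (mat_apply m e x))^2)" by (simp add: e_def)
    also have "\<dots> \<le> l2_sq (mat_apply m e)"
      using assms fin unfolding l2_sq_def bounded_mat_def l2_summable_def
      by (intro finite_sum_le_infsum) auto
    also have "\<dots> \<le> b^2 * l2_sq e"
      using b fin unfolding S_def by blast
    finally have "(cmod (m i j))^2 \<le> b^2" by (simp add: e_norm)
    moreover have "0 \<le> b" using b unfolding S_def by blast
    ultimately show ?thesis by (rule power2_le_imp_le)
  qed
  ultimately have "cmod (m i j) \<le> Inf S" by (intro cInf_greatest) auto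
  then show ?thesis unfolding op_norm_def S_def .
qed

lemma diag_nonzero_if_op_norm_id_diff_lt_1:
  assumes "bounded_mat s" and "op_norm (\<lambda>i j. id_mat i j - s i j) < 1"
  shows "s i i \<noteq> 0"
proof
  assume "s i i = 0"
  then have "1 \<le> op_norm (\<lambda>i j. id_mat i j - s i j)"
    using norm_entry_le_op_norm[OF bounded_mat_diff[OF bounded_mat_id_mat assms(1)], of i i]
    by (simp add: id_mat_def)
  with assms(2) show False by simp
qed

lemma id_mat_in_M_alg_d0: "id_mat \<in> M_alg (d0 :: 'a::metric_space \<Rightarrow> 'a \<Rightarrow> real)"
  unfolding M_alg_def
proof (intro CollectI conjI allI impI bounded_mat_id_mat)
  fix \<epsilon> :: real assume "\<epsilon> > 0"
  have "finite_prop (d0 :: 'a \<Rightarrow> 'a \<Rightarrow> real) id_mat"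
    unfolding finite_prop_def d0_def id_mat_def by (rule exI[of _ 2]) auto
  moreover have "op_norm (\<lambda>i j. id_mat i j - id_mat i j :: complex) < \<epsilon>"
    using \<open>\<epsilon> > 0\<close> by (simp add: op_norm_zero)
  ultimately show "\<exists>s. bounded_mat s \<and> finite_prop (d0 :: 'a \<Rightarrow> 'a \<Rightarrow> real) s
      \<and> op_norm (\<lambda>i j. id_mat i j - s i j) < \<epsilon>"
    using bounded_mat_id_mat by blast
qed

lemma diag_bounded_if_id_mat_in_M_alg:
  assumes "id_mat \<in> M_alg rho" shows "\<exists>L. \<forall>p. rho p p < L"
proof -
  obtain s where s: "bounded_mat s" "finite_prop rho s" "op_norm (\<lambda>i j. id_mat i j - s i j) < 1"
    using assms unfolding M_alg_def by (blast intro: zero_less_one)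
  obtain L where "\<And>x1 x2. rho x1 x2 \<ge> L \<Longrightarrow> s x2 x1 = 0"
    using s(2) unfolding finite_prop_def by blast
  then have "rho p p < L" for p
    using diag_nonzero_if_op_norm_id_diff_lt_1[OF s(1) s(3), of p] by (metis linorder_not_le)
  then show ?thesis by blast
qed

lemma metric_fun_nonneg:
  assumes "metric_fun d" shows "d x y \<ge> 0"
proof -
  have "d x x = 0" "d x x \<le> d x y + d y x" "d x y = d y x"
    using assms unfolding metric_fun_def by blast+
  then show ?thesis by linarith
qed

lemma comp_metric_lt_imp_close:
  assumes "metric_fun e" "metric_fun e'" and "comp_metric e e' p p < L"
  shows "\<exists>q. e (Inl p) (Inr q) < L \<and> e' (Inl q) (Inr p) < L"
proof -
  have "Inf {e (Inl p) (Inr q) + e' (Inl q) (Inr p) | q. True} < L"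
    using assms(3) unfolding comp_metric_def .
  from cInf_lessD[OF _ this] obtain q where "e (Inl p) (Inr q) + e' (Inl q) (Inr p) < L"
    by blast
  then show ?thesis
    using metric_fun_nonneg[OF assms(1), of "Inl p" "Inr q"] metric_fun_nonneg[OF assms(2), of "Inl q" "Inr p"]
    by (intro exI[of _ q]) linarith
qed

lemma metric_fun_sym: "metric_fun d \<Longrightarrow> d x y = d y x"
  unfolding metric_fun_def by blast

lemma metric_fun_close_pairs:
  assumes "metric_fun e" and "e a b < L" and "e a' b' < L"
  shows "e b b' \<le> e a a' + 2 * L" and "e a a' \<le> e b b' + 2 * L"
proof -
  have tri: "\<And>x y z. e x z \<le> e x y + e y z" and sym: "\<And>x y. e x y = e y x"
    using assms(1) unfolding metric_fun_def by blast+
  show "e b b' \<le> e a a' + 2 * L"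
    using tri[of b b' a] tri[of a b' a'] sym[of b a] assms(2,3) by linarith
  show "e a a' \<le> e b b' + 2 * L"
    using tri[of a a' b] tri[of b a' b'] sym[of b' a'] assms(2,3) by linarith
qed

lemma almost_isometry_if_close:
  fixes f :: "'a::metric_space \<Rightarrow> 'b::metric_space"
  assumes e: "metric_fun e"
    and i: "\<And>x x'. e (i x) (i x') = dist x x'" and j: "\<And>y y'. e (j y) (j y') = dist y y'"
    and close: "\<And>x. e (i x) (j (f x)) < L"
  shows "almost_isometry f"
  unfolding almost_isometry_def
proof (intro exI[of _ "2 * L + 1"] conjI allI)
  show "0 < 2 * L + 1"
    using metric_fun_nonneg[OF e, of "i undefined" "j (f undefined)"] close[of undefined] by linarith
  fix x x'
  show "dist x x' - (2 * L + 1) \<le> dist (f x) (f x')" "dist (f x) (f x') \<le> dist x x' + (2 * L + 1)"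
    using metric_fun_close_pairs[OF e close close, of x x'] by (simp_all add: i j)
qed

theorem corollary4p3:
  fixes d :: "'a::metric_space + 'b::metric_space \<Rightarrow> 'a + 'b \<Rightarrow> real"
    and d' :: "'b + 'a \<Rightarrow> 'b + 'a \<Rightarrow> real"
  assumes "countable (UNIV :: 'a set)" and "countable (UNIV :: 'b set)"
    and "\<forall>x::'a. open {x}" and "\<forall>y::'b. open {y}"
    and "d \<in> D_metrics" and "d' \<in> D_metrics"
    and "M_alg (comp_metric d' d) = M_alg (d0 :: 'b \<Rightarrow> 'b \<Rightarrow> real)"
    and "M_alg (comp_metric d d') = M_alg (d0 :: 'a \<Rightarrow> 'a \<Rightarrow> real)"
  shows "\<exists>(f::'a \<Rightarrow> 'b) (g::'b \<Rightarrow> 'a) C. almost_isometry f \<and> almost_isometry g \<and> C > 0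
           \<and> (\<forall>x. dist (g (f x)) x < C) \<and> (\<forall>y. dist (f (g y)) y < C)"
proof -
  have d: "metric_fun d" "\<And>x x'. d (Inl x) (Inl x') = dist x x'" "\<And>y y'. d (Inr y) (Inr y') = dist y y'"
    and d': "metric_fun d'" using assms(5,6) unfolding D_metrics_def by auto
  have "id_mat \<in> M_alg (comp_metric d' d)" "id_mat \<in> M_alg (comp_metric d d')"
    using assms(7,8) id_mat_in_M_alg_d0 by simp_all
  then obtain L1 L2 where L1: "\<forall>y. comp_metric d' d y y < L1" and L2: "\<forall>x. comp_metric d d' x x < L2"
    using diag_bounded_if_id_mat_in_M_alg by meson
  define L where "L = max L1 L2"
  have "\<forall>x. \<exists>y. d (Inl x) (Inr y) < L" "\<forall>y. \<exists>x. d (Inl x) (Inr y) < L"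
    using comp_metric_lt_imp_close[OF d(1) d'] comp_metric_lt_imp_close[OF d' d(1)] L1 L2
    unfolding L_def by (meson less_max_iff_disj)+
  then obtain f g where f: "\<And>x. d (Inl x) (Inr (f x)) < L" and g: "\<And>y. d (Inl (g y)) (Inr y) < L"
    by metis
  have "dist (g (f x)) x \<le> 2 * L" for x
    using metric_fun_close_pairs(2)[OF d(1) g[of "f x"] f[of x]] d(2,3) by simp
  moreover have "dist (f (g y)) y \<le> 2 * L" for y
    using metric_fun_close_pairs(1)[OF d(1) f[of "g y"] g[of y]] d(2,3) by simp
  moreover have "almost_isometry f"
    using almost_isometry_if_close[OF d(1) d(2,3) f] .
  moreover have "almost_isometry g"
    using g metric_fun_sym[OF d(1)] by (intro almost_isometry_if_close[OF d(1) d(3,2)]) simp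
  moreover have "L > 0"
    using f[of undefined] metric_fun_nonneg[OF d(1), of "Inl undefined" "Inr (f undefined)"] by linarith
  ultimately show ?thesis
    by (intro exI[of _ f] exI[of _ g] exI[of _ "2 * L + 1"]) (auto intro: le_less_trans[OF _ less_add_one])
qed

end
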